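(* Let $S$ be a Boolean inverse monoid satisfying condition (H). Then: (1) for each $s\in S$ there is an idempotent $e_s$ such that $e_s=\bigvee_{c\in C}c$ for every finite cover $C\subseteq\mathcal J_s$ of $\mathcal J_s$, and $\mathcal J_s=\{e\in E(S): e\le e_s\}$; (2) $e_{s^*}=e_s$ for all $s\in S$; (3) $e_{st}\le ss^*$ and $e_{st}\le t^*t$ for all $s,t\in S$; (4) $e_{s^*t}e_{t^*r}\le e_{s^*r}$ for all $s,t,r\in S$.
   Context: An inverse semigroup is a semigroup $S$ in which every $s$ has a unique $s^*$ with $ss^*s=s$, $s^*ss^*=s^*$; assumed countable with a zero. $E(S)$ is its set of idempotents; natural order $s\le t$ iff $ts^*s=s$ (on idempotents $e\le f$ iff $ef=e$). A Boolean inverse monoid is an inverse monoid in which every finite compatible set (pairwise $s^*t,st^*\in E(S)$) has a join, multiplication distributes over such joins, and $E(S)$ is a Boolean algebra. For $Z\subseteq W\subseteq E(S)$, $Z$ is a cover of $W$ if every nonzero $w\in W$ has some $z\in Z$ with $zw\ne0$. For $s\in S$ let $\mathcal J_s=\{e\in E(S): se=e\}$. Condition (H): for every $s\in S$, $\mathcal J_s$ admits a finite cover (by a finite subset of $\mathcal J_s$). *)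

theory Defs
  imports Main "HOL-Library.Countable_Set"
begin

text \<open>An inverse monoid with zero is presented by its multiplication m, the inverse
  operation st (s maps to s*), the zero z and the identity u, on the whole carrier type.\<close>

definition inverse_semigroup_zero ::
    "('a \<Rightarrow> 'a \<Rightarrow> 'a) \<Rightarrow> ('a \<Rightarrow> 'a) \<Rightarrow> 'a \<Rightarrow> bool" where
  "inverse_semigroup_zero m st z \<longleftrightarrow>
     (\<forall>a b c. m (m a b) c = m a (m b c)) \<and>
     (\<forall>s. m (m s (st s)) s = s \<and> m (m (st s) s) (st s) = st s) \<and>
     (\<forall>s t. m (m s t) s = s \<and> m (m t s) t = t \<longrightarrow> t = st s) \<and>
     (\<forall>s. m z s = z \<and> m s z = z)"

definition idems :: "('a \<Rightarrow> 'a \<Rightarrow> 'a) \<Rightarrow> 'a set" where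
  "idems m = {e. m e e = e}"

definition nat_le :: "('a \<Rightarrow> 'a \<Rightarrow> 'a) \<Rightarrow> ('a \<Rightarrow> 'a) \<Rightarrow> 'a \<Rightarrow> 'a \<Rightarrow> bool" where
  "nat_le m st s t \<longleftrightarrow> m t (m (st s) s) = s"

definition compatible_set :: "('a \<Rightarrow> 'a \<Rightarrow> 'a) \<Rightarrow> ('a \<Rightarrow> 'a) \<Rightarrow> 'a set \<Rightarrow> bool" where
  "compatible_set m st A \<longleftrightarrow>
     (\<forall>s\<in>A. \<forall>t\<in>A. m (st s) t \<in> idems m \<and> m s (st t) \<in> idems m)"

definition is_join :: "('a \<Rightarrow> 'a \<Rightarrow> 'a) \<Rightarrow> ('a \<Rightarrow> 'a) \<Rightarrow> 'a set \<Rightarrow> 'a \<Rightarrow> bool" where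
  "is_join m st A j \<longleftrightarrow>
     (\<forall>a\<in>A. nat_le m st a j) \<and> (\<forall>v. (\<forall>a\<in>A. nat_le m st a v) \<longrightarrow> nat_le m st j v)"

definition boolean_inverse_monoid ::
    "('a \<Rightarrow> 'a \<Rightarrow> 'a) \<Rightarrow> ('a \<Rightarrow> 'a) \<Rightarrow> 'a \<Rightarrow> 'a \<Rightarrow> bool" where
  "boolean_inverse_monoid m st z u \<longleftrightarrow>
     inverse_semigroup_zero m st z \<and>
     (\<forall>s. m u s = s \<and> m s u = s) \<and>
     \<comment> \<open>finite compatible sets have joins\<close>
     (\<forall>A. finite A \<and> compatible_set m st A \<longrightarrow> (\<exists>j. is_join m st A j)) \<and>
     \<comment> \<open>multiplication distributes over such joins\<close>
     (\<forall>A j s. finite A \<and> compatible_set m st A \<and> is_join m st A j \<longrightarrow>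
         is_join m st ((\<lambda>a. m s a) ` A) (m s j) \<and> is_join m st ((\<lambda>a. m a s) ` A) (m j s)) \<and>
     \<comment> \<open>E(S) is a Boolean algebra (bounded by z and u, meets are products, joins
         are the joins above, distributivity from the previous clause): complements\<close>
     (\<forall>e\<in>idems m. \<exists>f\<in>idems m. m e f = z \<and> is_join m st {e, f} u)"

definition is_cover :: "('a \<Rightarrow> 'a \<Rightarrow> 'a) \<Rightarrow> 'a \<Rightarrow> 'a set \<Rightarrow> 'a set \<Rightarrow> bool" where
  "is_cover m z Z W \<longleftrightarrow> (\<forall>w\<in>W. w \<noteq> z \<longrightarrow> (\<exists>c\<in>Z. m c w \<noteq> z))"

definition Jset :: "('a \<Rightarrow> 'a \<Rightarrow> 'a) \<Rightarrow> 'a \<Rightarrow> 'a set" where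
  "Jset m s = {e \<in> idems m. m s e = e}"

definition condition_H :: "('a \<Rightarrow> 'a \<Rightarrow> 'a) \<Rightarrow> 'a \<Rightarrow> bool" where
  "condition_H m z \<longleftrightarrow>
     (\<forall>s. \<exists>C. finite C \<and> C \<subseteq> Jset m s \<and> is_cover m z C (Jset m s))"

end

theory Submission
  imports Defs
begin

text \<open>J_s consists of the idempotents below s in the natural order. A finite cover C of
  J_s has a join j, which lies in J_s because C does. Every e in J_s is below j: otherwise
  e times the Boolean complement of j would be a nonzero member of J_s orthogonal to all
  of C. Hence e_s is the greatest element of J_s. Parts (2)-(4) follow because the natural
  order is preserved by inversion and by multiplication on either side, and
  a t st t b \<le> a b since t st t is idempotent.\<close>

locale inv_semigroup0 =
  fixes m :: "'a \<Rightarrow> 'a \<Rightarrow> 'a" (infixl "\<cdot>" 70) and st :: "'a \<Rightarrow> 'a" and z :: 'a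
  assumes inverse_semigroup_zero: "inverse_semigroup_zero m st z"
begin

lemma mult_assoc: "a \<cdot> b \<cdot> c = a \<cdot> (b \<cdot> c)"
  using inverse_semigroup_zero unfolding inverse_semigroup_zero_def by blast

lemma mult_inv_mult [simp]: "s \<cdot> (st s \<cdot> s) = s"
  using inverse_semigroup_zero unfolding inverse_semigroup_zero_def by (simp add: mult_assoc)

lemma inv_mult_inv [simp]: "st s \<cdot> (s \<cdot> st s) = st s"
  using inverse_semigroup_zero unfolding inverse_semigroup_zero_def by (simp add: mult_assoc)

lemma inv_unique: "s \<cdot> t \<cdot> s = s \<Longrightarrow> t \<cdot> s \<cdot> t = t \<Longrightarrow> t = st s"
  using inverse_semigroup_zero unfolding inverse_semigroup_zero_def by blast

lemma zero_mult [simp]: "z \<cdot> s = z" and mult_zero [simp]: "s \<cdot> z = z"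
  using inverse_semigroup_zero unfolding inverse_semigroup_zero_def by blast+

lemma mult_inv_mult_left [simp]: "s \<cdot> (st s \<cdot> (s \<cdot> w)) = s \<cdot> w"
  by (metis mult_assoc mult_inv_mult)

lemma inv_mult_inv_left [simp]: "st s \<cdot> (s \<cdot> (st s \<cdot> w)) = st s \<cdot> w"
  by (metis mult_assoc inv_mult_inv)

lemma inv_inv [simp]: "st (st s) = s"
  by (metis inv_unique mult_assoc mult_inv_mult inv_mult_inv)

lemma idem_mult_left: "e \<cdot> e = e \<Longrightarrow> e \<cdot> (e \<cdot> w) = e \<cdot> w"
  by (metis mult_assoc)

lemma inv_idem: "e \<cdot> e = e \<Longrightarrow> st e = e"
  by (metis inv_unique)

lemma idem_mult_inv: "s \<cdot> st s \<cdot> (s \<cdot> st s) = s \<cdot> st s"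
  by (simp add: mult_assoc)

lemma idem_inv_mult: "st s \<cdot> s \<cdot> (st s \<cdot> s) = st s \<cdot> s"
  by (simp add: mult_assoc)

text \<open>With x = st (e f), the element f x e is an inverse of e f, hence equals x; this
  makes x idempotent, and an idempotent is its own inverse.\<close>
lemma idem_mult_idem:
  assumes e: "e \<cdot> e = e" and f: "f \<cdot> f = f"
  shows "e \<cdot> f \<cdot> (e \<cdot> f) = e \<cdot> f"
proof -
  define x where "x = st (e \<cdot> f)"
  have "e \<cdot> f \<cdot> (f \<cdot> x \<cdot> e) \<cdot> (e \<cdot> f) = e \<cdot> f \<cdot> (x \<cdot> (e \<cdot> f))"
    by (simp add: mult_assoc idem_mult_left e f)
  also have "\<dots> = e \<cdot> f"
    unfolding x_def by (rule mult_inv_mult)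
  finally have "e \<cdot> f \<cdot> (f \<cdot> x \<cdot> e) \<cdot> (e \<cdot> f) = e \<cdot> f" .
  moreover have "f \<cdot> x \<cdot> e \<cdot> (e \<cdot> f) \<cdot> (f \<cdot> x \<cdot> e) = f \<cdot> (x \<cdot> (e \<cdot> f \<cdot> x)) \<cdot> e"
    by (simp add: mult_assoc idem_mult_left e f)
  then have "f \<cdot> x \<cdot> e \<cdot> (e \<cdot> f) \<cdot> (f \<cdot> x \<cdot> e) = f \<cdot> x \<cdot> e"
    unfolding x_def by (simp only: inv_mult_inv)
  ultimately have fxe: "f \<cdot> x \<cdot> e = x"
    unfolding x_def by (rule inv_unique)
  have "x \<cdot> x = f \<cdot> x \<cdot> e \<cdot> (f \<cdot> x \<cdot> e)"
    using fxe by simp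
  also have "\<dots> = f \<cdot> (x \<cdot> (e \<cdot> f) \<cdot> x) \<cdot> e"
    by (simp add: mult_assoc idem_mult_left e f)
  also have "\<dots> = f \<cdot> x \<cdot> e"
    unfolding x_def by (metis inv_mult_inv mult_assoc)
  finally have x: "x \<cdot> x = x"
    using fxe by simp
  then have "e \<cdot> f = x"
    using inv_idem[OF x] x_def by simp
  then show ?thesis
    using x by simp
qed

lemma idem_commute:
  assumes e: "e \<cdot> e = e" and f: "f \<cdot> f = f"
  shows "e \<cdot> f = f \<cdot> e"
proof -
  have "e \<cdot> f \<cdot> (f \<cdot> e) \<cdot> (e \<cdot> f) = e \<cdot> f"
    using idem_mult_idem[OF e f] by (simp add: mult_assoc idem_mult_left e f)
  moreover have "f \<cdot> e \<cdot> (e \<cdot> f) \<cdot> (f \<cdot> e) = f \<cdot> e"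
    using idem_mult_idem[OF f e] by (simp add: mult_assoc idem_mult_left e f)
  ultimately have "f \<cdot> e = st (e \<cdot> f)"
    by (rule inv_unique)
  then show ?thesis
    using inv_idem[OF idem_mult_idem[OF e f]] by simp
qed

lemma inv_mult: "st (a \<cdot> b) = st b \<cdot> st a"
proof (rule inv_unique[symmetric])
  have comm: "st a \<cdot> a \<cdot> (b \<cdot> st b) = b \<cdot> st b \<cdot> (st a \<cdot> a)"
    by (rule idem_commute[OF idem_inv_mult idem_mult_inv])
  have "a \<cdot> b \<cdot> (st b \<cdot> st a) \<cdot> (a \<cdot> b) = a \<cdot> (b \<cdot> st b \<cdot> (st a \<cdot> a)) \<cdot> b"
    by (simp add: mult_assoc)
  also have "\<dots> = a \<cdot> (st a \<cdot> a \<cdot> (b \<cdot> st b)) \<cdot> b"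
    by (simp only: comm)
  also have "\<dots> = a \<cdot> b"
    by (simp add: mult_assoc)
  finally show "a \<cdot> b \<cdot> (st b \<cdot> st a) \<cdot> (a \<cdot> b) = a \<cdot> b" .
  have "st b \<cdot> st a \<cdot> (a \<cdot> b) \<cdot> (st b \<cdot> st a) = st b \<cdot> (st a \<cdot> a \<cdot> (b \<cdot> st b)) \<cdot> st a"
    by (simp add: mult_assoc)
  also have "\<dots> = st b \<cdot> (b \<cdot> st b \<cdot> (st a \<cdot> a)) \<cdot> st a"
    by (simp only: comm)
  also have "\<dots> = st b \<cdot> st a"
    by (simp add: mult_assoc)
  finally show "st b \<cdot> st a \<cdot> (a \<cdot> b) \<cdot> (st b \<cdot> st a) = st b \<cdot> st a" .
qed

lemma idem_conj: "e \<cdot> e = e \<Longrightarrow> s \<cdot> e \<cdot> st s \<cdot> (s \<cdot> e \<cdot> st s) = s \<cdot> e \<cdot> st s"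
  using idem_commute[OF _ idem_inv_mult, of e s]
  by (simp add: mult_assoc) (metis mult_assoc mult_inv_mult)

lemma nat_le_idem_iff: "e \<cdot> e = e \<Longrightarrow> nat_le m st e t \<longleftrightarrow> t \<cdot> e = e"
  unfolding nat_le_def by (simp add: inv_idem)

lemma nat_le_iff_idem_right: "nat_le m st s t \<longleftrightarrow> (\<exists>f. f \<cdot> f = f \<and> s = t \<cdot> f)"
proof
  assume "nat_le m st s t"
  then show "\<exists>f. f \<cdot> f = f \<and> s = t \<cdot> f"
    unfolding nat_le_def by (metis idem_inv_mult)
next
  assume "\<exists>f. f \<cdot> f = f \<and> s = t \<cdot> f"
  then obtain f where f: "f \<cdot> f = f" and s: "s = t \<cdot> f"
    by blast
  have "t \<cdot> (st s \<cdot> s) = t \<cdot> (f \<cdot> (st t \<cdot> t)) \<cdot> f"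
    using s f by (simp add: inv_mult inv_idem mult_assoc)
  also have "\<dots> = t \<cdot> (st t \<cdot> t) \<cdot> (f \<cdot> f)"
    using idem_commute[OF f idem_inv_mult] by (simp add: mult_assoc)
  finally show "nat_le m st s t"
    unfolding nat_le_def using s f by simp
qed

lemma nat_le_inv:
  assumes "nat_le m st s t"
  shows "nat_le m st (st s) (st t)"
proof -
  from assms obtain f where f: "f \<cdot> f = f" and s: "s = t \<cdot> f"
    by (auto simp: nat_le_iff_idem_right)
  have "st s = st t \<cdot> (t \<cdot> f \<cdot> st t)"
    using idem_commute[OF f idem_inv_mult, of t] s
    by (simp add: inv_mult inv_idem f mult_assoc) (metis mult_assoc inv_mult_inv)
  then show ?thesis
    using idem_conj[OF f, of t] by (auto simp: nat_le_iff_idem_right)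
qed

lemma nat_le_inv_iff: "nat_le m st (st s) (st t) \<longleftrightarrow> nat_le m st s t"
  using nat_le_inv[of "st s" "st t"] nat_le_inv[of s t] by auto

lemma nat_le_iff_idem_left: "nat_le m st s t \<longleftrightarrow> (\<exists>e. e \<cdot> e = e \<and> s = e \<cdot> t)"
proof -
  have "nat_le m st s t \<longleftrightarrow> (\<exists>e. e \<cdot> e = e \<and> st s = st t \<cdot> e)"
    by (subst nat_le_inv_iff[symmetric]) (rule nat_le_iff_idem_right)
  also have "\<dots> \<longleftrightarrow> (\<exists>e. e \<cdot> e = e \<and> s = e \<cdot> t)"
    by (metis inv_inv inv_mult inv_idem)
  finally show ?thesis .
qed

lemma nat_le_refl: "nat_le m st s s"
  by (simp add: nat_le_def)

lemma nat_le_trans [trans]: "nat_le m st s t \<Longrightarrow> nat_le m st t r \<Longrightarrow> nat_le m st s r"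
  unfolding nat_le_iff_idem_right by (metis mult_assoc idem_mult_idem)

lemma nat_le_mult_left: "nat_le m st s t \<Longrightarrow> nat_le m st (c \<cdot> s) (c \<cdot> t)"
  unfolding nat_le_iff_idem_right by (metis mult_assoc)

lemma nat_le_mult_right: "nat_le m st s t \<Longrightarrow> nat_le m st (s \<cdot> c) (t \<cdot> c)"
  unfolding nat_le_iff_idem_left by (metis mult_assoc)

lemma zero_nat_le: "nat_le m st z t"
  by (simp add: nat_le_def)

lemma idem_nat_le_antisym:
  "e \<cdot> e = e \<Longrightarrow> f \<cdot> f = f \<Longrightarrow> nat_le m st e f \<Longrightarrow> nat_le m st f e \<Longrightarrow> e = f"
  by (metis nat_le_idem_iff idem_commute)

lemma Jset_eq_idems_below: "Jset m s = {e \<in> idems m. nat_le m st e s}"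
  by (auto simp: Jset_def idems_def nat_le_idem_iff)

lemma Jset_subset_Jset_inv: "Jset m s \<subseteq> Jset m (st s)"
proof
  fix e
  assume "e \<in> Jset m s"
  then have e: "e \<cdot> e = e" and "nat_le m st e s"
    by (simp_all add: Jset_eq_idems_below idems_def)
  then have "nat_le m st e (st s)"
    using nat_le_inv inv_idem by metis
  then show "e \<in> Jset m (st s)"
    using e by (simp add: Jset_eq_idems_below idems_def)
qed

lemma Jset_inv: "Jset m (st s) = Jset m s"
  using Jset_subset_Jset_inv[of s] Jset_subset_Jset_inv[of "st s"] by simp

lemma Jset_mult_le_range:
  assumes "e \<in> Jset m (s \<cdot> t)"
  shows "nat_le m st e (s \<cdot> st s)"
proof -
  have e: "e \<cdot> e = e" and ste: "s \<cdot> (t \<cdot> e) = e"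
    using assms by (simp_all add: Jset_def idems_def mult_assoc)
  have "s \<cdot> st s \<cdot> e = s \<cdot> (st s \<cdot> (s \<cdot> (t \<cdot> e)))"
    by (simp only: ste mult_assoc)
  also have "\<dots> = e"
    unfolding mult_inv_mult_left by (rule ste)
  finally show ?thesis
    by (rule nat_le_idem_iff[OF e, THEN iffD2])
qed

lemma Jset_mult_le_domain: "e \<in> Jset m (s \<cdot> t) \<Longrightarrow> nat_le m st e (st t \<cdot> t)"
  using Jset_mult_le_range[of e "st t" "st s"] Jset_inv[of "s \<cdot> t"] by (simp add: inv_mult)

text \<open>The product e f lies below a t st t b, and t st t is an idempotent, so below a b.\<close>
lemma Jset_mult:
  assumes "e \<in> Jset m (a \<cdot> t)" and "f \<in> Jset m (st t \<cdot> b)"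
  shows "e \<cdot> f \<in> Jset m (a \<cdot> b)"
proof -
  have e: "e \<cdot> e = e" "nat_le m st e (a \<cdot> t)" and f: "f \<cdot> f = f" "nat_le m st f (st t \<cdot> b)"
    using assms by (simp_all add: Jset_eq_idems_below idems_def)
  have "nat_le m st (e \<cdot> f) (a \<cdot> t \<cdot> f)"
    using e(2) by (rule nat_le_mult_right)
  also have "nat_le m st \<dots> (a \<cdot> t \<cdot> (st t \<cdot> b))"
    using f(2) by (rule nat_le_mult_left)
  also have "nat_le m st \<dots> (a \<cdot> b)"
  proof -
    have "nat_le m st (t \<cdot> st t \<cdot> b) b"
      unfolding nat_le_iff_idem_left using idem_mult_inv by blast
    then show ?thesis
      using nat_le_mult_left[of "t \<cdot> st t \<cdot> b" b a] by (simp add: mult_assoc)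
  qed
  finally show ?thesis
    using idem_mult_idem[OF e(1) f(1)] by (simp add: Jset_eq_idems_below idems_def)
qed

lemma idems_compatible: "A \<subseteq> idems m \<Longrightarrow> compatible_set m st A"
  unfolding compatible_set_def idems_def by (simp add: subset_eq inv_idem idem_mult_idem)

text \<open>Meaningful only when J_s has a greatest element, which is what (H) provides.\<close>
definition Jset_top :: "'a \<Rightarrow> 'a" where
  "Jset_top s = (THE j. j \<in> Jset m s \<and> (\<forall>e \<in> Jset m s. nat_le m st e j))"

lemma Jset_top_eq:
  assumes "j \<in> Jset m s" and "\<forall>e \<in> Jset m s. nat_le m st e j"
  shows "Jset_top s = j"
  unfolding Jset_top_def
proof (rule the_equality)
  show "j \<in> Jset m s \<and> (\<forall>e \<in> Jset m s. nat_le m st e j)"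
    using assms by blast
  show "i = j" if "i \<in> Jset m s \<and> (\<forall>e \<in> Jset m s. nat_le m st e i)" for i
  proof (rule idem_nat_le_antisym)
    show "i \<cdot> i = i" "j \<cdot> j = j"
      using that assms(1) by (simp_all add: Jset_def idems_def)
    show "nat_le m st i j" "nat_le m st j i"
      using that assms by blast+
  qed
qed

lemma Jset_top_inv: "Jset_top (st s) = Jset_top s"
  by (simp add: Jset_top_def Jset_inv)

end

locale boolean_inv_monoid = inv_semigroup0 +
  fixes u :: 'a
  assumes boolean_inverse_monoid: "boolean_inverse_monoid m st z u"
begin

lemma unit_mult [simp]: "u \<cdot> s = s" and mult_unit [simp]: "s \<cdot> u = s"
  using boolean_inverse_monoid unfolding boolean_inverse_monoid_def by blast+

lemma join_exists: "finite A \<Longrightarrow> compatible_set m st A \<Longrightarrow> \<exists>j. is_join m st A j"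
  using boolean_inverse_monoid unfolding boolean_inverse_monoid_def by blast

lemma join_mult_left:
  "finite A \<Longrightarrow> compatible_set m st A \<Longrightarrow> is_join m st A j \<Longrightarrow>
    is_join m st ((\<lambda>a. s \<cdot> a) ` A) (s \<cdot> j)"
  using boolean_inverse_monoid unfolding boolean_inverse_monoid_def by blast

lemma idem_complement: "e \<cdot> e = e \<Longrightarrow> \<exists>f. f \<cdot> f = f \<and> e \<cdot> f = z \<and> is_join m st {e, f} u"
  using boolean_inverse_monoid unfolding boolean_inverse_monoid_def idems_def by blast

lemma join_idems_idem:
  assumes "A \<subseteq> idems m" and "is_join m st A j"
  shows "j \<cdot> j = j"
proof -
  have "\<forall>a \<in> A. nat_le m st a u"
    using assms(1) by (auto simp: idems_def nat_le_idem_iff)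
  then have "nat_le m st j u"
    using assms(2) unfolding is_join_def by blast
  then have "j = st j \<cdot> j"
    unfolding nat_le_def by simp
  then show ?thesis
    by (metis idem_inv_mult)
qed

lemma idem_nat_le_if_disjoint_complement:
  assumes e: "e \<cdot> e = e" and j: "j \<cdot> j = j" and f: "f \<cdot> f = f"
    and complement: "is_join m st {j, f} u" and disjoint: "e \<cdot> f = z"
  shows "nat_le m st e j"
proof -
  have "is_join m st ((\<lambda>a. e \<cdot> a) ` {j, f}) (e \<cdot> u)"
    using j f complement by (intro join_mult_left idems_compatible) (auto simp: idems_def)
  then have "is_join m st {e \<cdot> j, z} e"
    using disjoint by simp
  then have "nat_le m st e (e \<cdot> j)"
    using nat_le_refl zero_nat_le unfolding is_join_def by blast
  then have "e \<cdot> j = e"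
    using e nat_le_idem_iff idem_commute[OF j e] by (metis mult_assoc)
  then show ?thesis
    using e nat_le_idem_iff idem_commute[OF j e] by simp
qed

lemma join_mem_Jset:
  assumes "C \<subseteq> Jset m s" and "is_join m st C j"
  shows "j \<in> Jset m s"
proof -
  have "C \<subseteq> idems m" and "\<forall>c \<in> C. nat_le m st c s"
    using assms(1) by (auto simp: Jset_eq_idems_below)
  then show ?thesis
    using assms(2) join_idems_idem
    by (auto simp: Jset_eq_idems_below is_join_def idems_def)
qed

text \<open>If e in J_s were not below j, its part e f outside j would be a nonzero element
  of J_s orthogonal to every member of C.\<close>
lemma Jset_below_cover_join:
  assumes C: "C \<subseteq> Jset m s" and cover: "is_cover m z C (Jset m s)"
    and join: "is_join m st C j" and "e \<in> Jset m s"
  shows "nat_le m st e j"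
proof -
  have e: "e \<cdot> e = e" "s \<cdot> e = e"
    using \<open>e \<in> Jset m s\<close> by (auto simp: Jset_def idems_def)
  have j: "j \<cdot> j = j"
    using join_mem_Jset[OF C join] by (simp add: Jset_def idems_def)
  obtain f where f: "f \<cdot> f = f" and jf: "j \<cdot> f = z" and complement: "is_join m st {j, f} u"
    using idem_complement[OF j] by blast
  have "e \<cdot> f = z"
  proof (rule ccontr)
    assume "e \<cdot> f \<noteq> z"
    moreover have "e \<cdot> f \<in> Jset m s"
      using idem_mult_idem[OF e(1) f] e(2) by (simp add: Jset_def idems_def flip: mult_assoc)
    ultimately obtain c where "c \<in> C" and "c \<cdot> (e \<cdot> f) \<noteq> z"
      using cover unfolding is_cover_def by blast
    moreover have c: "c \<cdot> c = c" and "j \<cdot> c = c"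
      using \<open>c \<in> C\<close> C join nat_le_idem_iff
      by (auto simp: Jset_def idems_def is_join_def)
    then have "c \<cdot> f = z"
      using jf idem_commute[OF c j] by (metis mult_assoc mult_zero)
    ultimately show False
      using idem_commute[OF c e(1)] by (metis mult_assoc mult_zero)
  qed
  then show ?thesis
    using idem_nat_le_if_disjoint_complement[OF e(1) j f complement] by blast
qed

lemma cover_join_eq_Jset_top:
  assumes "finite C" and "C \<subseteq> Jset m s" and "is_cover m z C (Jset m s)"
  shows "is_join m st C (Jset_top s)"
proof -
  have "C \<subseteq> idems m"
    using assms(2) by (auto simp: Jset_def)
  then obtain j where join: "is_join m st C j"
    using assms(1) join_exists idems_compatible by blast
  have "Jset_top s = j"
    using Jset_top_eq join_mem_Jset[OF assms(2) join] Jset_below_cover_join[OF assms(2,3) join]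
    by blast
  then show ?thesis
    using join by simp
qed

lemma Jset_top_greatest:
  assumes "condition_H m z"
  shows "Jset_top s \<in> Jset m s" and "Jset m s = {e \<in> idems m. nat_le m st e (Jset_top s)}"
proof -
  obtain C where C: "finite C" "C \<subseteq> Jset m s" "is_cover m z C (Jset m s)"
    using assms unfolding condition_H_def by blast
  then have join: "is_join m st C (Jset_top s)"
    by (rule cover_join_eq_Jset_top)
  show top: "Jset_top s \<in> Jset m s"
    by (rule join_mem_Jset[OF C(2) join])
  show "Jset m s = {e \<in> idems m. nat_le m st e (Jset_top s)}"
    using top Jset_below_cover_join[OF C(2,3) join] nat_le_trans
    by (auto simp: Jset_eq_idems_below)
qed

end

theorem mainTheorem5:
  fixes m :: "'a \<Rightarrow> 'a \<Rightarrow> 'a" and st :: "'a \<Rightarrow> 'a" and z u :: 'a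
  assumes "countable (UNIV :: 'a set)"
    and "boolean_inverse_monoid m st z u"
    and "condition_H m z"
  shows "\<exists>ef :: 'a \<Rightarrow> 'a.
     (\<forall>s. ef s \<in> idems m \<and>
          (\<forall>C. finite C \<and> C \<subseteq> Jset m s \<and> is_cover m z C (Jset m s) \<longrightarrow> is_join m st C (ef s)) \<and>
          Jset m s = {e \<in> idems m. nat_le m st e (ef s)}) \<and>
     (\<forall>s. ef (st s) = ef s) \<and>
     (\<forall>s t. nat_le m st (ef (m s t)) (m s (st s)) \<and> nat_le m st (ef (m s t)) (m (st t) t)) \<and>
     (\<forall>s t r. nat_le m st (m (ef (m (st s) t)) (ef (m (st t) r))) (ef (m (st s) r)))"
proof -
  interpret boolean_inv_monoid m st z u
    using assms(2) by unfold_locales (simp_all add: boolean_inverse_monoid_def)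
  note top = Jset_top_greatest(1)[OF assms(3)] and Jset = Jset_top_greatest(2)[OF assms(3)]
  show ?thesis
  proof (intro exI[of _ Jset_top] conjI allI impI)
    fix s t r
    show "Jset_top s \<in> idems m"
      using top by (simp add: Jset_def)
    show "is_join m st C (Jset_top s)" if "finite C \<and> C \<subseteq> Jset m s \<and> is_cover m z C (Jset m s)" for C
      using that cover_join_eq_Jset_top by blast
    show "Jset m s = {e \<in> idems m. nat_le m st e (Jset_top s)}"
      by (rule Jset)
    show "Jset_top (st s) = Jset_top s"
      by (rule Jset_top_inv)
    show "nat_le m st (Jset_top (m s t)) (m s (st s))" "nat_le m st (Jset_top (m s t)) (m (st t) t)"
      using Jset_mult_le_range Jset_mult_le_domain top by blast+
    show "nat_le m st (m (Jset_top (m (st s) t)) (Jset_top (m (st t) r))) (Jset_top (m (st s) r))"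
      using Jset_mult[OF top top] Jset by blast
  qed
qed

end
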